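(* Let $K\subset S^3$ be a knot whose A-polynomial $A_K(L,M)$ is irreducible in $\mathbb{C}[L,M]$ and satisfies $A_K(-L,M)\neq A_K(L,M)$. Let $R_K(L,M):=\mathrm{Res}_\lambda\big(A_K(\lambda,M),\lambda^2-L\big)$. Then $R_K(L,M^2)$ is irreducible in $\mathbb{C}[L,M]$ and $\deg_L(R_K)=\deg_L(A_K)$.
   Context: $A_K(L,M)$ is the A-polynomial of Cooper–Culler–Gillet–Long–Shalen of $K$ (without the abelian factor $L-1$); it satisfies $A_K(L,-M)=A_K(L,M)$. $\mathrm{Res}_\lambda$ denotes the resultant eliminating the variable $\lambda$. *)

theory Defs
  imports "HOL-Computational_Algebra.Polynomial_Factorial" "Subresultants.Resultant_Prelim"
begin

text \<open>Bivariate polynomials in \<open>\<complex>[L,M]\<close> are represented as \<open>complex poly poly\<close>: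
  the outer variable is \<open>L\<close>, the inner variable (in the coefficients) is \<open>M\<close>.\<close>

definition varL :: "complex poly poly" where
  "varL = [:0, 1:]"

definition negL :: "complex poly poly \<Rightarrow> complex poly poly" where
  "negL P = P \<circ>\<^sub>p [:0, -1:]"

definition negM :: "complex poly poly \<Rightarrow> complex poly poly" where
  "negM P = map_poly (\<lambda>c. c \<circ>\<^sub>p [:0, -1:]) P"

definition sqM :: "complex poly poly \<Rightarrow> complex poly poly" where
  "sqM P = map_poly (\<lambda>c. c \<circ>\<^sub>p [:0, 0, 1:]) P"

text \<open>\<open>Res_\<lambda>(A(\<lambda>,M), \<lambda>^2 - L)\<close>: both are regarded as polynomials in \<open>\<lambda>\<close> with coefficients
  in \<open>\<complex>[L,M]\<close>; \<open>A(\<lambda>,M)\<close> has coefficients \<open>coeff A i\<close> (constants in \<open>L\<close>).\<close>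
definition R_poly :: "complex poly poly \<Rightarrow> complex poly poly" where
  "R_poly A = resultant (map_poly (\<lambda>c. [:c:]) A) [: - varL, 0, 1 :]"

end

theory Submission
  imports Defs "Subresultants.Subresultant" "HOL-Computational_Algebra.Field_as_Ring"
begin

text \<open>Split \<open>A(\<lambda>,M) = E(\<lambda>\<^sup>2,M) + \<lambda> O(\<lambda>\<^sup>2,M)\<close>. Reducing modulo the monic \<open>\<lambda>\<^sup>2 - L\<close> gives
  \<open>R = E\<^sup>2 - L O\<^sup>2\<close>, so \<open>R(L\<^sup>2,M) = A(L,M) A(-L,M)\<close>, which yields the degree. Since \<open>A\<close> is even
  in \<open>M\<close>, \<open>A(L,M\<^sup>2)\<close> is still irreducible (the extra symmetry \<open>M \<mapsto> \<i>M\<close> rules out a splitting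
  into conjugate factors), and as it is not even in \<open>L\<close>, a factorisation of \<open>R(L,M\<^sup>2)\<close> pulled
  back along \<open>L \<mapsto> L\<^sup>2\<close> must be trivial.\<close>

lemma det_2x2:
  assumes "(A :: 'a :: comm_ring_1 mat) \<in> carrier_mat 2 2"
  shows "det A = A $$ (0,0) * A $$ (1,1) - A $$ (0,1) * A $$ (1,0)"
proof -
  have minor: "mat_delete A 0 j \<in> carrier_mat 1 1" for j
    using mat_delete_carrier[OF assms] by simp
  have "det A = (\<Sum>j<2. A $$ (0,j) * cofactor A 0 j)"
    by (rule laplace_expansion_row[OF assms]) simp
  also have "\<dots> = A $$ (0,0) * A $$ (1,1) - A $$ (0,1) * A $$ (1,0)"
    using assms by (simp add: cofactor_def det_single[OF minor] numeral_2_eq_2) (simp add: mat_delete_def)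
  finally show ?thesis .
qed

lemma det_3x3:
  assumes "(A :: 'a :: comm_ring_1 mat) \<in> carrier_mat 3 3"
  shows "det A = A $$ (0,0) * (A $$ (1,1) * A $$ (2,2) - A $$ (1,2) * A $$ (2,1))
     - A $$ (0,1) * (A $$ (1,0) * A $$ (2,2) - A $$ (1,2) * A $$ (2,0))
     + A $$ (0,2) * (A $$ (1,0) * A $$ (2,1) - A $$ (1,1) * A $$ (2,0))"
proof -
  have minor: "mat_delete A 0 j \<in> carrier_mat 2 2" for j
    using mat_delete_carrier[OF assms] by simp
  have "det A = (\<Sum>j<3. A $$ (0,j) * cofactor A 0 j)"
    by (rule laplace_expansion_row[OF assms]) simp
  also have "\<dots> = A $$ (0,0) * (A $$ (1,1) * A $$ (2,2) - A $$ (1,2) * A $$ (2,1))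
     - A $$ (0,1) * (A $$ (1,0) * A $$ (2,2) - A $$ (1,2) * A $$ (2,0))
     + A $$ (0,2) * (A $$ (1,0) * A $$ (2,1) - A $$ (1,1) * A $$ (2,0))"
    using assms by (simp add: cofactor_def det_2x2[OF minor] numeral_3_eq_3)
      (simp add: mat_delete_def numeral_2_eq_2 algebra_simps)
  finally show ?thesis .
qed

lemma resultant_quadratic_linear:
  fixes c e f :: "'a :: comm_ring_1"
  shows "resultant [:c, 0, 1:] [:e, f:] = e * e + c * f * f"
proof (cases "f = 0")
  case True
  then show ?thesis by (simp add: power2_eq_square)
next
  case False
  then have deg: "degree [:c, 0, 1:] = 2" "degree [:e, f:] = 1" by auto
  have "sylvester_mat [:c, 0, 1:] [:e, f:] \<in> carrier_mat 3 3"
    using sylvester_carrier_mat[of "[:c, 0, 1:]" "[:e, f:]"] unfolding deg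
    by (simp add: numeral_3_eq_3)
  from det_3x3[OF this] show ?thesis
    using False by (simp add: resultant_def sylvester_index_mat deg algebra_simps)
qed

lemma resultant_reduce_monic:
  fixes F G H B :: "'a :: idom poly"
  assumes FGH: "F + B * G = H" and monic: "lead_coeff G = 1" and deg: "degree H < degree G"
  shows "resultant F G = (-1) ^ (degree F * degree G) * resultant G H"
proof (cases "degree G \<le> degree F")
  case False
  have "B = 0"
  proof (rule ccontr)
    assume "B \<noteq> 0"
    then have "degree (B * G) \<ge> degree G"
      using monic by (cases "G = 0") (auto simp: degree_mult_eq)
    moreover have "B * G = H - F" using FGH by (simp add: algebra_simps)
    then have "degree (B * G) \<le> max (degree H) (degree F)"
      using degree_diff_le_max[of H F] by simp
    ultimately show False using False deg by linarith
  qed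
  then show ?thesis using FGH resultant_swap[of F G] by simp
next
  case True
  have G0: "degree G > 0" using deg by simp
  show ?thesis
  proof (cases "degree H = 0")
    case True
    then obtain h where h: "H = [:h:]" by (metis degree_eq_zeroE)
    from BT_lemma_1_13[OF FGH \<open>degree G \<le> degree F\<close>] G0 True
    have "subresultant 0 F G = smult ((-1) ^ (degree F * degree G) * h ^ (degree G - 1)) [:h:]"
      by (simp add: monic h)
    from arg_cong[OF this, of "\<lambda>x. coeff x 0"] G0
    have "resultant F G = (-1) ^ (degree F * degree G) * h ^ degree G"
      by (simp add: coeff_subresultant_0_0_resultant mult.assoc flip: power_Suc2)
    then show ?thesis by (simp add: h)
  next
    case False
    from BT_lemma_1_12[OF FGH \<open>degree G \<le> degree F\<close>] False deg
    have "subresultant 0 F G = smult ((-1) ^ (degree F * degree G)) (subresultant 0 G H)"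
      by (simp add: monic)
    from arg_cong[OF this, of "\<lambda>x. coeff x 0"] show ?thesis
      by (simp add: coeff_subresultant_0_0_resultant)
  qed
qed

interpretation const_poly_hom: inj_comm_ring_hom "\<lambda>c :: 'a :: comm_ring_1. [:c:]"
  by unfold_locales auto
interpretation const_poly_hom: map_poly_inj_comm_ring_hom "\<lambda>c :: 'a :: comm_ring_1. [:c:]" ..

lemma map_poly_const_poly_pCons [simp]:
  "map_poly (\<lambda>c :: 'a :: comm_ring_1. [:c:]) (pCons a p) = pCons [:a:] (map_poly (\<lambda>c. [:c:]) p)"
  by (rule poly_eqI) (simp add: coeff_map_poly coeff_pCons split: nat.split)

lemma even_odd_decomposition:
  fixes p :: "'a :: comm_ring_1 poly"
  obtains e d where "p = e \<circ>\<^sub>p [:0, 0, 1:] + [:0, 1:] * (d \<circ>\<^sub>p [:0, 0, 1:])"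
proof (induction p arbitrary: thesis)
  case 0
  then show ?case by (metis add.right_neutral mult_zero_right pcompose_0)
next
  case (pCons a p)
  then obtain e d where p: "p = e \<circ>\<^sub>p [:0, 0, 1:] + [:0, 1:] * (d \<circ>\<^sub>p [:0, 0, 1:])"
    by blast
  have "pCons a p = pCons a d \<circ>\<^sub>p [:0, 0, 1:] + [:0, 1:] * (e \<circ>\<^sub>p [:0, 0, 1:])"
    unfolding pcompose_pCons p by (simp add: algebra_simps pCons_eq_iff flip: pCons_0_as_mult)
  then show ?case by (rule pCons.prems)
qed

lemma square_minus_var_dvd:
  fixes p :: "'a :: comm_ring_1 poly"
  shows "[:-[:0, 1:], 0, 1:] dvd map_poly (\<lambda>c. [:c:]) (p \<circ>\<^sub>p [:0, 0, 1:]) - [:p:]"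
proof (induction p)
  case 0
  then show ?case by simp
next
  case (pCons a p)
  define G :: "'a poly poly" where "G = [:-[:0, 1:], 0, 1:]"
  define P where "P = map_poly (\<lambda>c. [:c:]) (p \<circ>\<^sub>p [:0, 0, 1:])"
  have lift_sq: "map_poly (\<lambda>c. [:c:]) [:0, 0, 1:] = G + [:[:0, 1:]:]"
    unfolding G_def by (rule poly_eqI) (simp add: coeff_map_poly coeff_pCons split: nat.split)
  have "map_poly (\<lambda>c. [:c:]) (pCons a p \<circ>\<^sub>p [:0, 0, 1:]) - [:pCons a p:]
      = G * P + [:[:0, 1:]:] * (P - [:p:])"
    unfolding pcompose_pCons const_poly_hom.hom_add const_poly_hom.hom_mult lift_sq P_def
    by (simp add: algebra_simps flip: pCons_0_as_mult)
  moreover have "G dvd P - [:p:]" using pCons.IH unfolding G_def P_def .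
  ultimately show ?case unfolding G_def[symmetric] P_def[symmetric]
    by (metis dvd_add dvd_mult dvd_triv_left)
qed

lemma resultant_square_minus_var:
  fixes e d :: "'a :: idom poly"
  shows "resultant (map_poly (\<lambda>c. [:c:]) (e \<circ>\<^sub>p [:0, 0, 1:] + [:0, 1:] * (d \<circ>\<^sub>p [:0, 0, 1:])))
      [:-[:0, 1:], 0, 1:] = e * e - [:0, 1:] * d * d"
proof -
  define G :: "'a poly poly" where "G = [:-[:0, 1:], 0, 1:]"
  define F where "F = map_poly (\<lambda>c. [:c:]) (e \<circ>\<^sub>p [:0, 0, 1:] + [:0, 1:] * (d \<circ>\<^sub>p [:0, 0, 1:]))"
  have lift_var: "map_poly (\<lambda>c. [:c:]) [:0, 1:] = [:0, 1:]"
    by (rule poly_eqI) (simp add: coeff_map_poly coeff_pCons split: nat.split)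
  have "G dvd [:e, d:] - F"
  proof -
    have "[:e, d:] - F = - ((map_poly (\<lambda>c. [:c:]) (e \<circ>\<^sub>p [:0, 0, 1:]) - [:e:])
        + [:0, 1:] * (map_poly (\<lambda>c. [:c:]) (d \<circ>\<^sub>p [:0, 0, 1:]) - [:d:]))"
      unfolding F_def const_poly_hom.hom_add const_poly_hom.hom_mult lift_var
      by (simp add: algebra_simps flip: pCons_0_as_mult)
    then show ?thesis unfolding G_def
      using square_minus_var_dvd[of e] square_minus_var_dvd[of d] by (metis dvd_add dvd_minus_iff dvd_mult)
  qed
  then obtain B where "[:e, d:] - F = G * B" by (elim dvdE)
  then have "F + B * G = [:e, d:]" by (simp add: algebra_simps)
  from resultant_reduce_monic[OF this] have "resultant F G = resultant G [:e, d:]"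
    by (simp add: G_def power_mult)
  also have "\<dots> = e * e - [:0, 1:] * d * d"
    unfolding G_def resultant_quadratic_linear by simp
  finally show ?thesis unfolding F_def G_def .
qed

lemma pcompose_neg_var_neg_var: "[:0, -1:] \<circ>\<^sub>p [:0, -1:] = ([:0, 1:] :: 'a :: comm_ring_1 poly)"
  by (simp add: pcompose_pCons)

lemma pcompose_square_pcompose_neg_var:
  fixes p :: "'a :: comm_ring_1 poly"
  shows "p \<circ>\<^sub>p [:0, 0, 1:] \<circ>\<^sub>p [:0, -1:] = p \<circ>\<^sub>p [:0, 0, 1:]"
  by (simp add: pcompose_pCons flip: pcompose_assoc)

lemma pcompose_square_even_odd_norm:
  fixes e d :: "'a :: comm_ring_1 poly"
  defines "p \<equiv> e \<circ>\<^sub>p [:0, 0, 1:] + [:0, 1:] * (d \<circ>\<^sub>p [:0, 0, 1:])"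
  shows "(e * e - [:0, 1:] * d * d) \<circ>\<^sub>p [:0, 0, 1:] = p * (p \<circ>\<^sub>p [:0, -1:])"
proof -
  define E D where "E = e \<circ>\<^sub>p [:0, 0, 1:]" and "D = d \<circ>\<^sub>p [:0, 0, 1:]"
  have reflected: "p \<circ>\<^sub>p [:0, -1:] = E - [:0, 1:] * D"
    unfolding p_def pcompose_add pcompose_mult pcompose_square_pcompose_neg_var E_def D_def by (simp add: pcompose_pCons)
  have "(e * e - [:0, 1:] * d * d) \<circ>\<^sub>p [:0, 0, 1:] = E * E - ([:0, 1:] * [:0, 1:]) * D * D"
    unfolding E_def D_def by (simp add: pcompose_diff pcompose_mult pcompose_pCons)
  also have "\<dots> = (E + [:0, 1:] * D) * (E - [:0, 1:] * D)"
    by (simp only: algebra_simps)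
  finally show ?thesis using reflected unfolding p_def E_def D_def by (simp only:)
qed


lemma irreducible_involution_iff:
  fixes f :: "'a :: algebraic_semidom \<Rightarrow> 'a"
  assumes mult: "\<And>x y. f (x * y) = f x * f y" and invol: "\<And>x. f (f x) = x"
    and one: "f 1 = 1" and zero: "f 0 = 0"
  shows "irreducible (f x) \<longleftrightarrow> irreducible x"
proof -
  have unit: "is_unit (f u)" if "is_unit u" for u
    using that by (metis dvdE dvdI mult one)
  have "irreducible (f x)" if "irreducible x" for x
  proof (rule irreducibleI)
    show "f x \<noteq> 0" using that zero invol by (metis irreducible_def)
    show "\<not> is_unit (f x)" using that unit invol by (metis irreducible_def)
    fix a b assume "f x = a * b"
    then have "x = f a * f b" using invol mult by metis
    then have "is_unit (f a) \<or> is_unit (f b)" using that by (simp add: irreducible_def)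
    then show "is_unit a \<or> is_unit b" using unit invol by metis
  qed
  then show ?thesis using invol by metis
qed

lemma is_unit_pcompose_square_imp_is_unit:
  fixes p :: "'a :: {idom_divide, algebraic_semidom} poly"
  assumes "is_unit (p \<circ>\<^sub>p [:0, 0, 1:])"
  shows "is_unit p"
proof -
  obtain c where c: "p \<circ>\<^sub>p [:0, 0, 1:] = [:c:]" "is_unit c" using assms by (rule is_unit_polyE)
  then have "degree p = 0" using degree_pcompose[of p "[:0, 0, 1:]"] by simp
  then obtain a where "p = [:a:]" by (elim degree_eq_zeroE)
  with c show ?thesis by (simp add: is_unit_const_poly_iff)
qed

text \<open>If \<open>P(x\<^sup>2) = Q(x) Q(-x)\<close> with \<open>Q\<close> prime, a factorisation \<open>P = F G\<close> puts \<open>Q\<close> into, say,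
  \<open>F(x\<^sup>2)\<close>; the cofactor of \<open>Q\<close> there is then either a unit, which makes \<open>Q\<close> even, or all of
  \<open>Q(-x)\<close>, which makes \<open>G(x\<^sup>2)\<close> and hence \<open>G\<close> a unit.\<close>
lemma irreducible_if_pcompose_square_eq_mult_reflection:
  fixes P Q :: "'a :: {idom_divide, algebraic_semidom} poly"
  assumes prime: "prime_elem Q" and not_even: "Q \<circ>\<^sub>p [:0, -1:] \<noteq> Q"
    and P: "P \<circ>\<^sub>p [:0, 0, 1:] = Q * (Q \<circ>\<^sub>p [:0, -1:])"
  shows "irreducible P"
proof -
  define refl :: "'a poly \<Rightarrow> 'a poly" where "refl p = p \<circ>\<^sub>p [:0, -1:]" for p
  have refl_mult: "refl (p * q) = refl p * refl q" for p q
    unfolding refl_def by (rule pcompose_mult)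
  have refl_sq: "refl (p \<circ>\<^sub>p [:0, 0, 1:]) = p \<circ>\<^sub>p [:0, 0, 1:]" for p
    unfolding refl_def by (rule pcompose_square_pcompose_neg_var)
  have refl_refl: "refl (refl p) = p" for p
    unfolding refl_def by (simp only: pcompose_neg_var_neg_var pcompose_idR flip: pcompose_assoc)
  have irr_refl: "irreducible (refl Q)"
    using irreducible_involution_iff[of refl, OF refl_mult refl_refl] prime
    by (simp add: refl_def prime_elem_imp_irreducible)
  have cofactor_unit: "is_unit G"
    if "F \<circ>\<^sub>p [:0, 0, 1:] * (G \<circ>\<^sub>p [:0, 0, 1:]) = Q * refl Q" "Q dvd F \<circ>\<^sub>p [:0, 0, 1:]" for F G
  proof -
    obtain H where H: "F \<circ>\<^sub>p [:0, 0, 1:] = Q * H" using \<open>Q dvd _\<close> by (elim dvdE)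
    have "Q \<noteq> 0" using prime by (simp add: prime_elem_def)
    then have "H * (G \<circ>\<^sub>p [:0, 0, 1:]) = refl Q" using that(1) H by (simp add: mult.assoc)
    then consider "is_unit H" | "is_unit (G \<circ>\<^sub>p [:0, 0, 1:])"
      using irr_refl by (metis irreducibleD)
    then show ?thesis
    proof cases
      case 1
      then obtain c where "H = [:c:]" by (elim is_unit_polyE)
      then have "refl H = H" by (simp add: refl_def)
      then have "refl Q * H = Q * H" by (metis H refl_mult refl_sq)
      then have "refl Q = Q" using \<open>is_unit H\<close> by auto
      with not_even show ?thesis by (simp add: refl_def)
    qed (rule is_unit_pcompose_square_imp_is_unit)
  qed
  show ?thesis
  proof (rule irreducibleI)
    have "degree Q \<noteq> 0" using not_even by (metis degree_eq_zeroE pcompose_const)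
    then have "degree (P \<circ>\<^sub>p [:0, 0, 1:]) \<noteq> 0"
      using P prime irr_refl by (simp add: degree_mult_eq prime_elem_def irreducible_def refl_def)
    then show "P \<noteq> 0" "\<not> is_unit P"
      by (auto simp: degree_pcompose elim: is_unit_polyE)
  next
    fix F G assume "P = F * G"
    then have FG: "F \<circ>\<^sub>p [:0, 0, 1:] * (G \<circ>\<^sub>p [:0, 0, 1:]) = Q * refl Q"
      using P by (simp add: pcompose_mult refl_def)
    then have "Q dvd F \<circ>\<^sub>p [:0, 0, 1:] \<or> Q dvd G \<circ>\<^sub>p [:0, 0, 1:]"
      using prime by (metis dvd_triv_left prime_elem_dvd_mult_iff)
    then show "is_unit F \<or> is_unit G"
      using cofactor_unit[OF FG] cofactor_unit[of G F] FG by (auto simp: mult.commute)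
  qed
qed

abbreviation pcompose_coeffs :: "'a :: comm_ring_1 poly \<Rightarrow> 'a poly poly \<Rightarrow> 'a poly poly" where
  "pcompose_coeffs q \<equiv> map_poly (\<lambda>c. c \<circ>\<^sub>p q)"

interpretation pcompose_coeffs_hom: map_poly_comm_ring_hom "\<lambda>c :: 'a :: comm_ring_1 poly. c \<circ>\<^sub>p q"
  for q ..

lemma pcompose_coeffs_pcompose_coeffs:
  "pcompose_coeffs q (pcompose_coeffs r P) = pcompose_coeffs (r \<circ>\<^sub>p q) P"
  by (rule poly_eqI) (simp add: coeff_map_poly pcompose_assoc)

lemma pcompose_coeffs_var: "pcompose_coeffs [:0, 1:] P = P"
  by (rule poly_eqI) (metis coeff_map_poly pcompose_0 pcompose_idR)

lemma pcompose_coeffs_const: "pcompose_coeffs q [:[:a:]:] = [:[:a:]:]"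
  by (rule poly_eqI) (simp add: coeff_map_poly coeff_pCons split: nat.split)

lemma pcompose_coeffs_eq_iff:
  fixes q :: "'a :: idom poly"
  assumes "degree q > 0"
  shows "pcompose_coeffs q X = pcompose_coeffs q Y \<longleftrightarrow> X = Y"
proof
  assume eq: "pcompose_coeffs q X = pcompose_coeffs q Y"
  show "X = Y"
  proof (rule poly_eqI)
    fix i
    have "(coeff X i - coeff Y i) \<circ>\<^sub>p q = 0"
      using arg_cong[OF eq, of "\<lambda>P. coeff P i"] by (simp add: coeff_map_poly pcompose_diff)
    from pcompose_eq_0[OF this assms] show "coeff X i = coeff Y i" by simp
  qed
qed simp

lemma const_var_dvd_iff:
  fixes P :: "'a :: idom poly poly"
  shows "[:[:0, 1:]:] dvd P \<longleftrightarrow> (\<forall>i. poly (coeff P i) 0 = 0)"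
  by (simp add: const_poly_dvd_iff poly_eq_0_iff_dvd)

lemma const_var_dvd_pcompose_coeffs_iff:
  fixes P :: "'a :: idom poly poly"
  assumes "poly q 0 = 0"
  shows "[:[:0, 1:]:] dvd pcompose_coeffs q P \<longleftrightarrow> [:[:0, 1:]:] dvd P"
  unfolding const_var_dvd_iff using assms by (simp add: coeff_map_poly poly_pcompose)

lemma even_poly_imp_pcompose_square:
  fixes c :: "'a :: {idom, ring_char_0} poly"
  assumes "c \<circ>\<^sub>p [:0, -1:] = c"
  obtains e where "c = e \<circ>\<^sub>p [:0, 0, 1:]"
proof -
  obtain e d where c: "c = e \<circ>\<^sub>p [:0, 0, 1:] + [:0, 1:] * (d \<circ>\<^sub>p [:0, 0, 1:])"
    by (rule even_odd_decomposition)
  define D where "D = d \<circ>\<^sub>p [:0, 0, 1:]"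
  have "c \<circ>\<^sub>p [:0, -1:] = e \<circ>\<^sub>p [:0, 0, 1:] - [:0, 1:] * D"
    unfolding c pcompose_add pcompose_mult pcompose_square_pcompose_neg_var D_def by (simp add: pcompose_pCons)
  with assms c have "2 * ([:0, 1:] * D) = 0" unfolding D_def[symmetric] by (simp add: algebra_simps)
  then have "D = 0" by simp
  with c show ?thesis using that unfolding D_def by simp
qed

lemma negM_negM [simp]: "negM (negM X) = X"
  unfolding negM_def pcompose_coeffs_pcompose_coeffs pcompose_neg_var_neg_var pcompose_coeffs_var ..

lemma negM_mult: "negM (X * Y) = negM X * negM Y"
  unfolding negM_def by (rule pcompose_coeffs_hom.hom_mult)

lemma sqM_mult: "sqM (X * Y) = sqM X * sqM Y"
  unfolding sqM_def by (rule pcompose_coeffs_hom.hom_mult)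

lemma negM_sqM [simp]: "negM (sqM X) = sqM X"
  unfolding negM_def sqM_def pcompose_coeffs_pcompose_coeffs by (simp add: pcompose_pCons)

lemma sqM_eq_iff [simp]: "sqM X = sqM Y \<longleftrightarrow> X = Y"
  unfolding sqM_def by (rule pcompose_coeffs_eq_iff) simp

lemma is_unit_sqM_iff [simp]: "is_unit (sqM X) \<longleftrightarrow> is_unit X"
proof
  assume "is_unit (sqM X)"
  then obtain c where c: "sqM X = [:c:]" "is_unit c" by (rule is_unit_polyE)
  from \<open>is_unit c\<close> obtain a :: complex where "c = [:a:]" "is_unit a" by (rule is_unit_polyE)
  with c have "X = [:[:a:]:]" using sqM_eq_iff[of X "[:[:a:]:]"] by (simp add: sqM_def pcompose_coeffs_const)
  with \<open>is_unit a\<close> show "is_unit X" by (simp add: is_unit_const_poly_iff dvd_field_iff)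
qed (simp add: sqM_def pcompose_coeffs_hom.hom_dvd_1)

lemma pcompose_coeffs_imag_twice:
  "pcompose_coeffs [:0, \<i>:] (pcompose_coeffs [:0, \<i>:] X) = negM X"
  unfolding negM_def pcompose_coeffs_pcompose_coeffs by (simp add: pcompose_pCons)

lemma pcompose_coeffs_imag_sqM: "pcompose_coeffs [:0, \<i>:] (sqM X) = sqM (negM X)"
  unfolding negM_def sqM_def pcompose_coeffs_pcompose_coeffs by (simp add: pcompose_pCons)

lemma negM_fixed_imp_sqM:
  assumes "negM X = X"
  obtains Y where "X = sqM Y"
proof -
  define root :: "complex poly \<Rightarrow> complex poly" where "root c = (SOME e. c = e \<circ>\<^sub>p [:0, 0, 1:])" for c
  have root: "c = root c \<circ>\<^sub>p [:0, 0, 1:]" if "c \<circ>\<^sub>p [:0, -1:] = c" for c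
    unfolding root_def by (rule someI_ex) (metis even_poly_imp_pcompose_square[OF that])
  have root_0: "root 0 = 0" using root[of 0] pcompose_eq_0[of "root 0" "[:0, 0, 1:]"] by simp
  have even: "coeff X i \<circ>\<^sub>p [:0, -1:] = coeff X i" for i
    using arg_cong[OF assms, of "\<lambda>P. coeff P i"] by (simp add: negM_def coeff_map_poly)
  have "X = sqM (map_poly root X)"
  proof (rule poly_eqI)
    fix i
    have "coeff (sqM (map_poly root X)) i = root (coeff X i) \<circ>\<^sub>p [:0, 0, 1:]"
      by (simp add: sqM_def coeff_map_poly root_0)
    then show "coeff X i = coeff (sqM (map_poly root X)) i" using root[OF even] by simp
  qed
  then show ?thesis by (rule that)
qed

lemma sqM_factor_unit:
  assumes irr: "irreducible A" and factor: "sqM A = Y * Z" and even: "negM Y = Y" and "Y \<noteq> 0"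
  shows "is_unit Y \<or> is_unit Z"
proof -
  obtain Y' where Y': "Y = sqM Y'" using even by (rule negM_fixed_imp_sqM)
  have "Y * negM Z = Y * Z" using factor even by (metis negM_sqM negM_mult)
  then have "negM Z = Z" using \<open>Y \<noteq> 0\<close> by simp
  then obtain Z' where Z': "Z = sqM Z'" by (rule negM_fixed_imp_sqM)
  have "A = Y' * Z'" using factor unfolding Y' Z' sqM_mult[symmetric] by simp
  from irreducibleD[OF irr this] show ?thesis unfolding Y' Z' by simp
qed

lemma negM_eq_if_dvd_negM:
  assumes "C \<noteq> 0" and "C dvd negM C"
  shows "negM C = C \<or> negM C = - C"
proof -
  obtain k where k: "negM C = C * k" using assms(2) by (elim dvdE)
  have "C * (k * negM k) = C * 1" by (metis k negM_mult negM_negM mult.assoc mult_1_right)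
  then have "k * negM k = 1" using assms(1) mult_left_cancel by blast
  then have "is_unit k" by (metis dvd_triv_left)
  then obtain a where "k = [:[:a:]:]" by (auto elim!: is_unit_polyE)
  then have "negM k = k" by (simp add: negM_def pcompose_coeffs_const)
  with \<open>k * negM k = 1\<close> have "k = 1 \<or> k = -1" by (simp add: square_eq_1_iff)
  with k show ?thesis by auto
qed

lemma const_var_dvd_if_negM_eq_uminus:
  assumes "negM C = - C"
  shows "[:[:0, 1:]:] dvd C"
proof -
  have "poly (coeff (negM C) i) 0 = poly (coeff C i) 0" for i
    by (simp add: negM_def coeff_map_poly poly_pcompose)
  then show ?thesis unfolding const_var_dvd_iff using assms by simp
qed

lemma irreducible_negM_fixed_imp_not_const_var_dvd:
  assumes irr: "irreducible A" and even: "negM A = A"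
  shows "\<not> [:[:0, 1:]:] dvd A"
proof
  assume "[:[:0, 1:]:] dvd A"
  then obtain Z where Z: "A = [:[:0, 1:]:] * Z" by (elim dvdE)
  have "\<not> is_unit ([:[:0, 1:]:] :: complex poly poly)" by (simp add: is_unit_poly_iff)
  then have "is_unit Z" using irreducibleD[OF irr Z] by simp
  then obtain a where "Z = [:[:a:]:]" by (auto elim!: is_unit_polyE)
  then have "negM A = - A"
    unfolding Z negM_mult by (simp add: negM_def pcompose_coeffs_const pcompose_pCons)
  with even have "A = 0" by simp
  with irr show False by simp
qed

lemma dvd_negM_if_dvd_imag_norm:
  assumes prime: "prime_elem C" and dvd: "C dvd pcompose_coeffs [:0, \<i>:] (C * negM C)"
  shows "C dvd negM C"
proof -
  define rot where "rot = pcompose_coeffs [:0, \<i>:]"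
  have rot_dvd: "rot X dvd rot Y" if "X dvd Y" for X Y
    using that unfolding rot_def by (rule pcompose_coeffs_hom.hom_dvd)
  have rot_rot: "rot (rot X) = negM X" for X
    unfolding rot_def by (rule pcompose_coeffs_imag_twice)
  have "C dvd rot C * rot (negM C)" using dvd unfolding rot_def by (simp add: pcompose_coeffs_hom.hom_mult)
  then consider "C dvd rot C" | "C dvd rot (negM C)"
    using prime by (auto simp: prime_elem_dvd_mult_iff)
  then show ?thesis
  proof cases
    case 1
    then show ?thesis using rot_dvd[OF 1] rot_rot by (metis dvd_trans)
  next
    case 2
    have "rot C dvd C" using rot_dvd[OF 2] rot_rot by simp
    then have "negM C dvd C" using rot_dvd[of "rot C" C] rot_rot by (metis dvd_trans)
    then show ?thesis using pcompose_coeffs_hom.hom_dvd[of "negM C" C "[:0, -1:]"]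
      by (simp add: negM_def[symmetric])
  qed
qed

text \<open>A prime factor \<open>C\<close> of \<open>A(L,M\<^sup>2)\<close> either is associated to \<open>C(L,-M)\<close>, and then \<open>C\<close> is even
  (an odd \<open>C\<close> would be divisible by \<open>M\<close>) and comes from a factor of \<open>A\<close>; or \<open>C(L,M) C(L,-M)\<close>
  comes from a factor of \<open>A\<close>, hence is all of \<open>A(L,M\<^sup>2)\<close> up to a unit, which is impossible
  because \<open>A(L,M\<^sup>2)\<close> is invariant under \<open>M \<mapsto> \<i>M\<close> while \<open>C\<close> divides neither \<open>C(L,\<i>M)\<close>
  nor \<open>C(L,-\<i>M)\<close>.\<close>
lemma irreducible_sqM:
  assumes irr: "irreducible A" and even: "negM A = A"
  shows "irreducible (sqM A)"
proof -
  have "sqM A \<noteq> 0" using irr sqM_eq_iff[of A 0] by (auto simp: irreducible_def sqM_def)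
  moreover have "\<not> is_unit (sqM A)" using irr by (simp add: irreducible_def)
  ultimately obtain C where "C dvd sqM A" "prime C" by (metis prime_divisor_exists)
  then have prime: "prime_elem C" by (simp add: prime_imp_prime_elem)
  then have "C \<noteq> 0" "\<not> is_unit C" by (simp_all add: prime_elem_def)
  obtain Q where Q: "sqM A = C * Q" using \<open>C dvd sqM A\<close> by (elim dvdE)
  show ?thesis
  proof (cases "C dvd negM C")
    case True
    then consider "negM C = C" | "negM C = - C" using \<open>C \<noteq> 0\<close> negM_eq_if_dvd_negM by blast
    then show ?thesis
    proof cases
      case 1
      then have "is_unit Q" using sqM_factor_unit[OF irr Q 1 \<open>C \<noteq> 0\<close>] \<open>\<not> is_unit C\<close> by simp
      then show ?thesis
        unfolding Q using prime by (simp add: irreducible_mult_unit_right prime_elem_imp_irreducible)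
    next
      case 2
      then have "[:[:0, 1:]:] dvd sqM A" using \<open>C dvd sqM A\<close> by (metis const_var_dvd_if_negM_eq_uminus dvd_trans)
      then have "[:[:0, 1:]:] dvd A" unfolding sqM_def by (subst (asm) const_var_dvd_pcompose_coeffs_iff) simp_all
      with irreducible_negM_fixed_imp_not_const_var_dvd[OF irr even] show ?thesis by simp
    qed
  next
    case False
    have "C dvd negM C * negM Q" using Q negM_sqM[of A] by (metis dvd_triv_left negM_mult)
    then have "C dvd negM Q" using False prime by (simp add: prime_elem_dvd_mult_iff)
    then have "negM C dvd Q"
      using pcompose_coeffs_hom.hom_dvd[of C "negM Q" "[:0, -1:]"] by (simp add: negM_def[symmetric])
    then obtain Q' where Q': "Q = negM C * Q'" by (elim dvdE)
    have N: "sqM A = (C * negM C) * Q'" unfolding Q Q' by (simp add: mult.assoc)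
    have "negM (C * negM C) = C * negM C" by (simp add: negM_mult mult.commute)
    moreover have "C * negM C \<noteq> 0" using \<open>C \<noteq> 0\<close> by (metis mult_eq_0_iff negM_negM negM_mult mult_zero_left)
    moreover have "\<not> is_unit (C * negM C)" using \<open>\<not> is_unit C\<close> by simp
    ultimately have "is_unit Q'" using sqM_factor_unit[OF irr N] by blast
    have "pcompose_coeffs [:0, \<i>:] (sqM A) = sqM A" by (simp add: pcompose_coeffs_imag_sqM even)
    then have "sqM A = pcompose_coeffs [:0, \<i>:] (C * negM C) * pcompose_coeffs [:0, \<i>:] Q'"
      unfolding N pcompose_coeffs_hom.hom_mult by simp
    moreover have "is_unit (pcompose_coeffs [:0, \<i>:] Q')"
      using \<open>is_unit Q'\<close> by (rule pcompose_coeffs_hom.hom_dvd_1)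
    ultimately have "C dvd pcompose_coeffs [:0, \<i>:] (C * negM C)"
      using \<open>C dvd sqM A\<close> by (simp add: dvd_mult_unit_iff)
    with dvd_negM_if_dvd_imag_norm[OF prime] False show ?thesis by simp
  qed
qed

lemma sqM_pcompose: "sqM (X \<circ>\<^sub>p Y) = sqM X \<circ>\<^sub>p sqM Y"
  unfolding sqM_def by (rule pcompose_hom.map_poly_pcompose)

lemma sqM_negL: "sqM (negL X) = negL (sqM X)"
proof -
  have "sqM [:0, -1:] = [:0, -1:]"
    unfolding sqM_def
    by (rule poly_eqI) (simp add: coeff_map_poly coeff_pCons pcompose_uminus split: nat.split)
  then show ?thesis unfolding negL_def sqM_pcompose by simp
qed

lemma sqM_pcompose_square: "sqM (X \<circ>\<^sub>p [:0, 0, 1:]) = sqM X \<circ>\<^sub>p [:0, 0, 1:]"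
proof -
  have "sqM [:0, 0, 1:] = [:0, 0, 1:]"
    unfolding sqM_def by (rule poly_eqI) (simp add: coeff_map_poly coeff_pCons split: nat.split)
  then show ?thesis unfolding sqM_pcompose by simp
qed

theorem proposition4p2:
  fixes A :: "complex poly poly"
  assumes irr: "irreducible A"
    and even_M: "negM A = A"
    and not_even_L: "negL A \<noteq> A"
  shows "irreducible (sqM (R_poly A)) \<and> degree (R_poly A) = degree A"
proof -
  obtain e d where A: "A = e \<circ>\<^sub>p [:0, 0, 1:] + [:0, 1:] * (d \<circ>\<^sub>p [:0, 0, 1:])"
    by (rule even_odd_decomposition)
  define R where "R = e * e - [:0, 1:] * d * d"
  have resultant: "R_poly A = R"
    unfolding R_poly_def varL_def R_def A by (rule resultant_square_minus_var)
  have R_square: "R \<circ>\<^sub>p [:0, 0, 1:] = A * negL A"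
    unfolding R_def negL_def A by (rule pcompose_square_even_odd_norm)
  have "A \<noteq> 0" "negL A \<noteq> 0" using irr by (auto simp: negL_def pcompose_eq_0_iff)
  then have "degree R * 2 = degree A * 2"
    using arg_cong[OF R_square, of degree] by (simp add: degree_mult_eq degree_pcompose negL_def)
  moreover have "irreducible (sqM R)"
  proof (rule irreducible_if_pcompose_square_eq_mult_reflection)
    show "prime_elem (sqM A)" using irreducible_sqM[OF irr even_M] by (simp add: prime_elem_iff_irreducible)
    show "sqM A \<circ>\<^sub>p [:0, -1:] \<noteq> sqM A" by (metis negL_def not_even_L sqM_eq_iff sqM_negL)
    show "sqM R \<circ>\<^sub>p [:0, 0, 1:] = sqM A * (sqM A \<circ>\<^sub>p [:0, -1:])"
      unfolding negL_def[symmetric] sqM_pcompose_square[symmetric] R_square sqM_mult sqM_negL ..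
  qed
  ultimately show ?thesis unfolding resultant by simp
qed

end
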